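(* Let $R$ be an Artinian ring, with notation as in the context, and let $m,n\ge0$. For each $1\le k\le q$ let $S(k)\subset\{1,\dots,\mu_km\}$ be a subset with $\mu_kn$ elements. Then there exists an $R$-linear map $g\colon R^n\to R^m$ such that every column-adapted map $h\colon R^m\to R^n$ with $\mathfrak S(h,k)=S(k)$ for all $1\le k\le q$ satisfies $h\circ g=\mathrm{id}$.
   Context: Let $R$ be an Artinian ring, $J(R)$ its Jacobson radical, $\overline R=R/J(R)$, and $\bar x$ (resp. $\bar A$) the image of an element (resp. entrywise image of a matrix). $\overline R$ is semisimple, $\overline R\cong \mathrm{Mat}_{\mu_1}(\mathbb D_1)\times\cdots\times\mathrm{Mat}_{\mu_q}(\mathbb D_q)$ with division rings $\mathbb D_k$; put $\mu=\mu_1+\cdots+\mu_q$. Fix orthogonal idempotents $e^k_i\in R$ ($1\le k\le q$, $1\le i\le\mu_k$) with $\sum_{k,i}e^k_i=1$ lifting the orthogonal idempotents $\bar e^k_i$ of $\overline R$ given by the diagonal matrix units of this decomposition (so $e^k_iR\cong e^{k'}_{i'}R$ iff $k=k'$). Let $\mathbb L_{hk}=e^h_1Re^k_1$; then $\overline{\mathbb L_{kk}}=\mathbb D_k$ and $\overline{\mathbb L_{hk}}=0$ for $h\ne k$. The Peirce decomposition $R\cong\mathrm{End}(R_R)=\bigoplus\mathrm{Hom}(e^k_jR,e^h_iR)$, with the isomorphisms $e^h_iR\cong e^h_1R$, gives an injective ring homomorphism (the Artin–Wedderburn embedding) $\Phi\colon R\to\mathrm{Mat}_\mu(R)$, $x\mapsto(\Phi_{hk}(x))_{h,k=1}^q$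 a $q\times q$ block matrix with $\Phi_{hk}(x)\in\mathrm{Mat}_{\mu_h,\mu_k}(\mathbb L_{hk})$; its reduction $\overline\Phi\colon\overline R\to\mathrm{Mat}_\mu(\overline R)$ sends $\bar x$ to the block-diagonal matrix whose $k$-th block is the $\mathrm{Mat}_{\mu_k}(\mathbb D_k)$-component of $\bar x$. Vectors $R^n$ are columns (right $R$-modules); an $R$-linear $h\colon R^m\to R^n$ is an $n\times m$ matrix, and $\Phi(h)\in\mathrm{Mat}_{\mu n,\mu m}(R)$ is obtained by replacing each entry $x$ by $\Phi(x)$; similarly $\overline\Phi(\bar h)$. Distinguished basis: for $1\le k\le q$, $1\le a\le m$, $1\le r\le\mu_k$, let $\vec v(k)_{(a-1)\mu_k+r}$ be the standard basis vector of $R^{\mu m}$ of index $(a-1)\mu+\mu_1+\cdots+\mu_{k-1}+r$; define $\vec w(k)_i$ ($1\le i\le\mu_kn$) in $R^{\mu n}$ in the same way, bars denoting images in $\overline R^{\mu m},\overline R^{\mu n}$. For surjective $h$ and each $k$, $\mathfrak S(h,k)$ is the smallest, in the lexicographic order on increasingly sorted sequences, subset $S\subset\{1,\dots,\mu_km\}$ such that $\{\overline\Phi(\bar h)(\overline{\vec v(k)_j}):j\in S\}$ is a basis of the right $\mathbb D_k$-module $\bigoplus_{i=1}^{\mu_kn}\overline{\vec w(k)_i}\cdot\mathbb D_k$ (it has $\mu_kn$ elements). A surjective $R$-linear $h\colon R^m\to R^n$ is column-adapted if (i) for every $k$, writing $\mathfrak S(h,k)=\{j_1<\cdots<j_{\mu_kn}\}$,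 $\overline\Phi(\bar h)(\overline{\vec v(k)_{j_i}})=\overline{\vec w(k)_i}$ for all $i$, and (ii) $\Phi(h)(\vec v(k)_{j_i})=\vec w(k)_i$ for all $k$ and $1\le i\le\mu_kn$. *)

theory Defs
  imports "Jordan_Normal_Form.Matrix"
begin

text \<open>Conventions: all indices are 0-based. The paper's block index k = 1..q is k = 0..<q,
 the idempotent e^k_i (i = 1..mu_k) is e k i (i = 0..<mu k), so e^k_1 is e k 0.
 The index sets of the paper, subsets of 1..mu_k m, become subsets of 0..<mu_k m.\<close>

definition right_ideal :: "'a::ring_1 set \<Rightarrow> bool" where
  "right_ideal I \<longleftrightarrow> 0 \<in> I \<and> (\<forall>x\<in>I. \<forall>y\<in>I. x + y \<in> I) \<and> (\<forall>x\<in>I. - x \<in> I)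
     \<and> (\<forall>x\<in>I. \<forall>r. x * r \<in> I)"

definition right_artinian :: "'a::ring_1 itself \<Rightarrow> bool" where
  "right_artinian _ \<longleftrightarrow>
     (\<forall>I :: nat \<Rightarrow> 'a set. (\<forall>k. right_ideal (I k)) \<and> (\<forall>k. I (Suc k) \<subseteq> I k)
        \<longrightarrow> (\<exists>N. \<forall>k\<ge>N. I k = I N))"

definition maximal_right_ideal :: "'a::ring_1 set \<Rightarrow> bool" where
  "maximal_right_ideal I \<longleftrightarrow> right_ideal I \<and> I \<noteq> UNIV \<and>
     (\<forall>K. right_ideal K \<and> I \<subseteq> K \<longrightarrow> K = I \<or> K = UNIV)"

definition jacobson :: "'a::ring_1 set" where
  "jacobson = \<Inter> {I. maximal_right_ideal I}"

definition principal_right :: "'a::ring_1 \<Rightarrow> 'a set" where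
  "principal_right e = {e * x | x. True}"

definition iso_right_modules :: "'a::ring_1 set \<Rightarrow> 'a set \<Rightarrow> bool" where
  "iso_right_modules A B \<longleftrightarrow> (\<exists>\<phi>. bij_betw \<phi> A B \<and> (\<forall>x\<in>A. \<forall>y\<in>A. \<phi> (x + y) = \<phi> x + \<phi> y)
      \<and> (\<forall>x\<in>A. \<forall>r. \<phi> (x * r) = \<phi> x * r))"

definition corner :: "'a::ring_1 \<Rightarrow> 'a \<Rightarrow> 'a set" where
  "corner e f = {e * x * f | x. True}"

definition division_mod_jac :: "'a::ring_1 \<Rightarrow> bool" where
  "division_mod_jac e \<longleftrightarrow> e \<notin> jacobson \<and>
     (\<forall>x\<in>corner e e. x \<notin> jacobson \<longrightarrow>
        (\<exists>y\<in>corner e e. x * y - e \<in> jacobson \<and> y * x - e \<in> jacobson))"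

text \<open>The standing setup: orthogonal idempotents e k i (k < q, i < mu k) summing to 1,
 whose images in R/J are primitive (the corner rings are division rings mod J),
 with e k i R iso e k' i' R iff k = k', together with chosen isomorphisms
 e k i R \<cong> e k 0 R given by left multiplication by s k i (inverse: left mult. by t k i).\<close>
definition aw_setup :: "nat \<Rightarrow> (nat \<Rightarrow> nat) \<Rightarrow> (nat \<Rightarrow> nat \<Rightarrow> 'a::ring_1)
   \<Rightarrow> (nat \<Rightarrow> nat \<Rightarrow> 'a) \<Rightarrow> (nat \<Rightarrow> nat \<Rightarrow> 'a) \<Rightarrow> bool" where
  "aw_setup q \<mu> e s t \<longleftrightarrow>
     (\<forall>k<q. 0 < \<mu> k) \<and>
     (\<forall>k<q. \<forall>i<\<mu> k. e k i * e k i = e k i) \<and>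
     (\<forall>k<q. \<forall>i<\<mu> k. \<forall>k'<q. \<forall>i'<\<mu> k'. (k, i) \<noteq> (k', i') \<longrightarrow> e k i * e k' i' = 0) \<and>
     (\<Sum>k<q. \<Sum>i<\<mu> k. e k i) = 1 \<and>
     (\<forall>k<q. \<forall>i<\<mu> k. division_mod_jac (e k i)) \<and>
     (\<forall>k<q. \<forall>i<\<mu> k. \<forall>k'<q. \<forall>i'<\<mu> k'.
         iso_right_modules (principal_right (e k i)) (principal_right (e k' i')) \<longleftrightarrow> k = k') \<and>
     (\<forall>k<q. \<forall>i<\<mu> k. s k i \<in> corner (e k 0) (e k i) \<and> t k i \<in> corner (e k i) (e k 0) \<and>
         s k i * t k i = e k 0 \<and> t k i * s k i = e k i)"

definition off :: "(nat \<Rightarrow> nat) \<Rightarrow> nat \<Rightarrow> nat" where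
  "off \<mu> k = (\<Sum>l<k. \<mu> l)"

text \<open>Phi(x): a mu x mu matrix, mu = off mu q; row index off h + i stands for (h,i),
 column index off k + j for (k,j); entry = the (h,i),(k,j) Peirce component of x
 transported to Hom(e k 0 R, e h 0 R) = e h 0 R e k 0.\<close>
definition Phi_elem :: "nat \<Rightarrow> (nat \<Rightarrow> nat) \<Rightarrow> (nat \<Rightarrow> nat \<Rightarrow> 'a::ring_1)
   \<Rightarrow> (nat \<Rightarrow> nat \<Rightarrow> 'a) \<Rightarrow> 'a \<Rightarrow> 'a mat" where
  "Phi_elem q \<mu> s t x = mat (off \<mu> q) (off \<mu> q) (\<lambda>(p, p').
     \<Sum>h<q. \<Sum>i<\<mu> h. \<Sum>k<q. \<Sum>j<\<mu> k.
        (if p = off \<mu> h + i \<and> p' = off \<mu> k + j then s h i * x * t k j else 0))"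

definition Phi_map :: "nat \<Rightarrow> (nat \<Rightarrow> nat) \<Rightarrow> (nat \<Rightarrow> nat \<Rightarrow> 'a::ring_1)
   \<Rightarrow> (nat \<Rightarrow> nat \<Rightarrow> 'a) \<Rightarrow> 'a mat \<Rightarrow> 'a mat" where
  "Phi_map q \<mu> s t h = mat (off \<mu> q * dim_row h) (off \<mu> q * dim_col h) (\<lambda>(r, c).
     Phi_elem q \<mu> s t (h $$ (r div off \<mu> q, c div off \<mu> q)) $$ (r mod off \<mu> q, c mod off \<mu> q))"

text \<open>Distinguished basis: bvec q mu N k j is the vector v(k)_j (N = m) resp. w(k)_j (N = n);
 with j = a * mu k + r (a < N, r < mu k) it is the standard basis vector of index
 a * mu + off mu k + r in R^(mu N).\<close>
definition bvec :: "nat \<Rightarrow> (nat \<Rightarrow> nat) \<Rightarrow> nat \<Rightarrow> nat \<Rightarrow> nat \<Rightarrow> 'a::ring_1 vec" where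
  "bvec q \<mu> N k j = unit_vec (off \<mu> q * N) ((j div \<mu> k) * off \<mu> q + off \<mu> k + j mod \<mu> k)"

definition vcongJ :: "'a::ring_1 vec \<Rightarrow> 'a vec \<Rightarrow> bool" where
  "vcongJ x y \<longleftrightarrow> dim_vec x = dim_vec y \<and> (\<forall>i<dim_vec x. x $ i - y $ i \<in> jacobson)"

definition lincomb :: "nat \<Rightarrow> (nat \<Rightarrow> 'a::ring_1 vec) \<Rightarrow> (nat \<Rightarrow> 'a) \<Rightarrow> nat set \<Rightarrow> 'a vec" where
  "lincomb N u c A = vec N (\<lambda>r. \<Sum>j\<in>A. u j $ r * c j)"

text \<open>D_k is the image of L_kk = e k 0 R e k 0 in R/J; an element of D_k is represented by an
 element of L_kk. is_basis_sel h k S: S is a subset of 0..<mu_k m such that the images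
 of Phi(h) v(k)_j (j in S) form a basis of the right D_k-module sum_i wbar(k)_i D_k.\<close>
definition is_basis_sel :: "nat \<Rightarrow> (nat \<Rightarrow> nat) \<Rightarrow> (nat \<Rightarrow> nat \<Rightarrow> 'a::ring_1)
   \<Rightarrow> (nat \<Rightarrow> nat \<Rightarrow> 'a) \<Rightarrow> (nat \<Rightarrow> nat \<Rightarrow> 'a) \<Rightarrow> nat \<Rightarrow> nat \<Rightarrow> 'a mat \<Rightarrow> nat \<Rightarrow> nat set \<Rightarrow> bool" where
  "is_basis_sel q \<mu> e s t m n h k S \<longleftrightarrow>
     (let u = (\<lambda>j. Phi_map q \<mu> s t h *\<^sub>v bvec q \<mu> m k j);
          w = bvec q \<mu> n k;
          L = corner (e k 0) (e k 0);
          N = off \<mu> q * n in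
      S \<subseteq> {..<\<mu> k * m} \<and>
      (\<forall>j\<in>S. \<exists>d. (\<forall>i<\<mu> k * n. d i \<in> L) \<and> vcongJ (u j) (lincomb N w d {..<\<mu> k * n})) \<and>
      (\<forall>c. (\<forall>j\<in>S. c j \<in> L) \<and> vcongJ (lincomb N u c S) (0\<^sub>v N) \<longrightarrow> (\<forall>j\<in>S. c j \<in> jacobson)) \<and>
      (\<forall>d. (\<forall>i<\<mu> k * n. d i \<in> L) \<longrightarrow>
          (\<exists>c. (\<forall>j\<in>S. c j \<in> L) \<and> vcongJ (lincomb N u c S) (lincomb N w d {..<\<mu> k * n}))))"

definition frakS :: "nat \<Rightarrow> (nat \<Rightarrow> nat) \<Rightarrow> (nat \<Rightarrow> nat \<Rightarrow> 'a::ring_1)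
   \<Rightarrow> (nat \<Rightarrow> nat \<Rightarrow> 'a) \<Rightarrow> (nat \<Rightarrow> nat \<Rightarrow> 'a) \<Rightarrow> nat \<Rightarrow> nat \<Rightarrow> 'a mat \<Rightarrow> nat \<Rightarrow> nat set" where
  "frakS q \<mu> e s t m n h k = (THE S. is_basis_sel q \<mu> e s t m n h k S \<and>
      (\<forall>S'. is_basis_sel q \<mu> e s t m n h k S' \<longrightarrow>
          S = S' \<or> (sorted_list_of_set S, sorted_list_of_set S') \<in> lexord {(a, b). a < b}))"

definition surjective_map :: "nat \<Rightarrow> nat \<Rightarrow> 'a::ring_1 mat \<Rightarrow> bool" where
  "surjective_map m n h \<longleftrightarrow> (\<forall>y\<in>carrier_vec n. \<exists>x\<in>carrier_vec m. h *\<^sub>v x = y)"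

definition column_adapted :: "nat \<Rightarrow> (nat \<Rightarrow> nat) \<Rightarrow> (nat \<Rightarrow> nat \<Rightarrow> 'a::ring_1)
   \<Rightarrow> (nat \<Rightarrow> nat \<Rightarrow> 'a) \<Rightarrow> (nat \<Rightarrow> nat \<Rightarrow> 'a) \<Rightarrow> nat \<Rightarrow> nat \<Rightarrow> 'a mat \<Rightarrow> bool" where
  "column_adapted q \<mu> e s t m n h \<longleftrightarrow>
     h \<in> carrier_mat n m \<and> surjective_map m n h \<and>
     (\<forall>k<q. let js = sorted_list_of_set (frakS q \<mu> e s t m n h k) in
        length js = \<mu> k * n \<and>
        (\<forall>i<\<mu> k * n. vcongJ (Phi_map q \<mu> s t h *\<^sub>v bvec q \<mu> m k (js ! i)) (bvec q \<mu> n k i)) \<and>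
        (\<forall>i<\<mu> k * n. Phi_map q \<mu> s t h *\<^sub>v bvec q \<mu> m k (js ! i) = bvec q \<mu> n k i))"

end

theory Submission imports Defs begin

text \<open>Only condition (ii) of column-adaptedness is used, together with the Peirce identity
  \<open>\<Sum>\<^sub>k\<^sub>,\<^sub>i t k i * s k i = \<Sum>\<^sub>k\<^sub>,\<^sub>i e k i = 1\<close>. Let \<open>j = b \<mu>\<^sub>k + c\<close> be the \<open>i\<close>-th element of \<open>S(k)\<close>, where
  \<open>i = a \<mu>\<^sub>k + r\<close>. The entry of \<open>\<Phi>(h) v(k)\<^sub>j\<close> at position \<open>(a', h', i')\<close> is
  \<open>s h' i' * x\<close> with \<open>x = h(a', b) * t k c\<close>, so \<open>\<Phi>(h) v(k)\<^sub>j = w(k)\<^sub>i\<close> gives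
  \<open>s h' i' * x = \<delta>\<close>; multiplying by \<open>t h' i'\<close> and summing yields \<open>x = \<delta>\<^sub>a\<^sub>'\<^sub>a t k r\<close>. Hence the
  matrix \<open>g\<close> with \<open>(b, a)\<close>-entry \<open>\<Sum> t k c * s k r\<close> (over those \<open>k, r\<close> whose \<open>b\<close> is the given
  one), which depends on the sets \<open>S(k)\<close> only, satisfies
  \<open>(h g)(a', a) = \<delta>\<^sub>a\<^sub>'\<^sub>a \<Sum>\<^sub>k\<^sub>,\<^sub>r t k r * s k r = \<delta>\<^sub>a\<^sub>'\<^sub>a\<close>.\<close>

lemma mult_add_less_mult:
  fixes a p M n :: nat
  assumes "a < n" "p < M"
  shows "a * M + p < M * n"
proof -
  have "a * M + p < Suc a * M" using assms(2) by simp
  also have "\<dots> \<le> n * M" using assms(1) by (intro mult_le_mono1) simp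
  finally show ?thesis by (simp add: mult.commute)
qed

lemma mult_add_eq_mult_add_iff:
  fixes a a' p p' M :: nat
  assumes "p < M" "p' < M"
  shows "a * M + p = a' * M + p' \<longleftrightarrow> a = a' \<and> p = p'"
proof
  assume eq: "a * M + p = a' * M + p'"
  have "a = (a * M + p) div M" "p = (a * M + p) mod M"
    "a' = (a' * M + p') div M" "p' = (a' * M + p') mod M"
    using assms by simp_all
  then show "a = a' \<and> p = p'" using eq by metis
qed simp

lemma sum_if_const_cond: "(\<Sum>x\<in>A. if P then f x else 0) = (if P then sum f A else 0)"
  by simp

lemma off_Suc: "off \<mu> (Suc k) = off \<mu> k + \<mu> k"
  by (simp add: off_def)

lemma off_mono: "k \<le> k' \<Longrightarrow> off \<mu> k \<le> off \<mu> k'"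
  unfolding off_def by (rule sum_mono2) auto

lemma off_add_less: "k < k' \<Longrightarrow> i < \<mu> k \<Longrightarrow> off \<mu> k + i < off \<mu> k'"
  using off_mono[of "Suc k" k' \<mu>] off_Suc[of \<mu> k] by simp

lemma off_add_eq_off_add_iff:
  assumes "i < \<mu> h" "i' < \<mu> h'"
  shows "off \<mu> h + i = off \<mu> h' + i' \<longleftrightarrow> h = h' \<and> i = i'"
  using off_add_less[of h h' i \<mu>] off_add_less[of h' h i' \<mu>] assms
  by (cases h h' rule: linorder_cases) auto

lemma Phi_elem_block_entry:
  assumes "h < q" "i < \<mu> h" "k < q" "j < \<mu> k"
  shows "Phi_elem q \<mu> s t x $$ (off \<mu> h + i, off \<mu> k + j) = s h i * x * t k j"
proof -
  have "(\<Sum>h'<q. \<Sum>i'<\<mu> h'. \<Sum>k'<q. \<Sum>j'<\<mu> k'.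
        (if off \<mu> h + i = off \<mu> h' + i' \<and> off \<mu> k + j = off \<mu> k' + j'
         then s h' i' * x * t k' j' else 0))
     = (\<Sum>h'<q. \<Sum>i'<\<mu> h'. \<Sum>k'<q. \<Sum>j'<\<mu> k'.
        (if h' = h \<and> i' = i \<and> k' = k \<and> j' = j then s h i * x * t k j else 0))"
    using assms by (intro sum.cong refl) (auto simp: off_add_eq_off_add_iff)
  also have "\<dots> = s h i * x * t k j"
    using assms by (simp add: sum_if_const_cond if_if_eq_conj[symmetric] sum.delta cong: if_cong)
  finally show ?thesis
    unfolding Phi_elem_def using assms off_add_less by simp
qed

lemma Phi_map_block_entry:
  assumes "a < dim_row H" "b < dim_col H" "p < off \<mu> q" "p' < off \<mu> q"
  shows "Phi_map q \<mu> s t H $$ (a * off \<mu> q + p, b * off \<mu> q + p')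
    = Phi_elem q \<mu> s t (H $$ (a, b)) $$ (p, p')"
  unfolding Phi_map_def using assms by (simp add: mult_add_less_mult)

lemma Phi_map_mult_bvec_entry:
  assumes H: "H \<in> carrier_mat n m" and "k < q" "j < \<mu> k * m"
    and "a' < n" "h' < q" "i' < \<mu> h'"
  shows "(Phi_map q \<mu> s t H *\<^sub>v bvec q \<mu> m k j) $ (a' * off \<mu> q + (off \<mu> h' + i'))
     = s h' i' * H $$ (a', j div \<mu> k) * t k (j mod \<mu> k)"
proof -
  let ?M = "off \<mu> q"
  have "0 < \<mu> k" using assms(3) by (cases "\<mu> k") simp_all
  then have b: "j div \<mu> k < m" and c: "j mod \<mu> k < \<mu> k"
    using assms(3) by (simp_all add: less_mult_imp_div_less mult.commute)
  have p: "off \<mu> h' + i' < ?M" and p': "off \<mu> k + j mod \<mu> k < ?M"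
    using assms(2,5,6) c off_add_less by blast+
  have "(Phi_map q \<mu> s t H *\<^sub>v bvec q \<mu> m k j) $ (a' * ?M + (off \<mu> h' + i'))
     = Phi_map q \<mu> s t H $$ (a' * ?M + (off \<mu> h' + i'), j div \<mu> k * ?M + (off \<mu> k + j mod \<mu> k))"
    using H assms(4) b p p' unfolding bvec_def
    by (simp add: Phi_map_def add.assoc mult_add_less_mult)
  also have "\<dots> = s h' i' * H $$ (a', j div \<mu> k) * t k (j mod \<mu> k)"
    using H assms b c p p'
    by (simp add: Phi_map_block_entry Phi_elem_block_entry)
  finally show ?thesis .
qed

lemma bvec_entry:
  assumes "k < q" "a < n" "r < \<mu> k" "a' < n" "h' < q" "i' < \<mu> h'"
  shows "(bvec q \<mu> n k (a * \<mu> k + r) :: 'a::ring_1 vec) $ (a' * off \<mu> q + (off \<mu> h' + i'))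
     = (if a' = a \<and> h' = k \<and> i' = r then 1 else 0)"
proof -
  have p: "off \<mu> h' + i' < off \<mu> q" and p': "off \<mu> k + r < off \<mu> q"
    using assms off_add_less by blast+
  then show ?thesis
    unfolding bvec_def using assms
    by (simp add: add.assoc mult_add_less_mult mult_add_eq_mult_add_iff off_add_eq_off_add_iff)
qed

lemma aw_setup_sum_t_mult_s:
  assumes "aw_setup q \<mu> e s t"
  shows "(\<Sum>k<q. \<Sum>i<\<mu> k. t k i * s k i) = 1"
  using assms unfolding aw_setup_def by (metis (no_types, lifting) lessThan_iff sum.cong)

lemma Phi_map_column_eq_bvecD:
  assumes aw: "aw_setup q \<mu> e s t"
    and H: "H \<in> carrier_mat n m" and "k < q" "j < \<mu> k * m" "a < n" "r < \<mu> k" "a' < n"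
    and col: "Phi_map q \<mu> s t H *\<^sub>v bvec q \<mu> m k j = bvec q \<mu> n k (a * \<mu> k + r)"
  shows "H $$ (a', j div \<mu> k) * t k (j mod \<mu> k) = (if a' = a then t k r else 0)"
proof -
  let ?x = "H $$ (a', j div \<mu> k) * t k (j mod \<mu> k)"
  have s_x: "s h' i' * ?x = (if a' = a \<and> h' = k \<and> i' = r then 1 else 0)"
    if "h' < q" "i' < \<mu> h'" for h' i'
  proof -
    have "s h' i' * ?x = (Phi_map q \<mu> s t H *\<^sub>v bvec q \<mu> m k j) $ (a' * off \<mu> q + (off \<mu> h' + i'))"
      using Phi_map_mult_bvec_entry[OF H assms(3,4,7) that] by (simp add: mult.assoc)
    then show ?thesis
      using bvec_entry[OF assms(3,5,6,7) that] by (simp add: col)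
  qed
  have "?x = (\<Sum>h'<q. \<Sum>i'<\<mu> h'. t h' i' * s h' i') * ?x"
    using aw_setup_sum_t_mult_s[OF aw] by simp
  also have "\<dots> = (\<Sum>h'<q. \<Sum>i'<\<mu> h'. t h' i' * (s h' i' * ?x))"
    by (simp add: sum_distrib_right mult.assoc)
  also have "\<dots> = (\<Sum>h'<q. \<Sum>i'<\<mu> h'. if h' = k \<and> i' = r then (if a' = a then t k r else 0) else 0)"
    by (intro sum.cong refl) (auto simp: s_x)
  also have "\<dots> = (if a' = a then t k r else 0)"
    using assms(3,6) by (simp add: sum_if_const_cond if_if_eq_conj[symmetric] sum.delta cong: if_cong)
  finally show ?thesis .
qed

text \<open>\<open>J k i\<close> stands for the \<open>i\<close>-th element of \<open>S(k)\<close> in increasing order.\<close>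
definition selection_right_inverse :: "nat \<Rightarrow> (nat \<Rightarrow> nat) \<Rightarrow> (nat \<Rightarrow> nat \<Rightarrow> 'a::ring_1)
   \<Rightarrow> (nat \<Rightarrow> nat \<Rightarrow> 'a) \<Rightarrow> nat \<Rightarrow> nat \<Rightarrow> (nat \<Rightarrow> nat \<Rightarrow> nat) \<Rightarrow> 'a mat" where
  "selection_right_inverse q \<mu> s t m n J = mat m n (\<lambda>(b, a). \<Sum>k<q. \<Sum>r<\<mu> k.
     if J k (a * \<mu> k + r) div \<mu> k = b then t k (J k (a * \<mu> k + r) mod \<mu> k) * s k r else 0)"

lemma selection_right_inverse_carrier:
  "selection_right_inverse q \<mu> s t m n J \<in> carrier_mat m n"
  by (simp add: selection_right_inverse_def)

lemma mult_selection_right_inverse: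
  assumes aw: "aw_setup q \<mu> e s t" and H: "H \<in> carrier_mat n m"
    and J: "\<And>k i. k < q \<Longrightarrow> i < \<mu> k * n \<Longrightarrow> J k i < \<mu> k * m"
    and col: "\<And>k i. k < q \<Longrightarrow> i < \<mu> k * n \<Longrightarrow>
       Phi_map q \<mu> s t H *\<^sub>v bvec q \<mu> m k (J k i) = bvec q \<mu> n k i"
  shows "H * selection_right_inverse q \<mu> s t m n J = 1\<^sub>m n"
proof (rule eq_matI)
  let ?g = "selection_right_inverse q \<mu> s t m n J"
  let ?b = "\<lambda>k a r. J k (a * \<mu> k + r) div \<mu> k" and ?c = "\<lambda>k a r. J k (a * \<mu> k + r) mod \<mu> k"
  fix a' a
  assume "a' < dim_row (1\<^sub>m n :: 'a mat)" "a < dim_col (1\<^sub>m n :: 'a mat)"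
  then have a': "a' < n" and a: "a < n" by simp_all
  have i: "a * \<mu> k + r < \<mu> k * n" if "r < \<mu> k" for k r
    using mult_add_less_mult[OF a that] .
  have b: "?b k a r < m" if "k < q" "r < \<mu> k" for k r
    using J[OF that(1) i[OF that(2)]] that(2) by (simp add: less_mult_imp_div_less mult.commute)
  have entry: "H $$ (a', ?b k a r) * t k (?c k a r) = (if a' = a then t k r else 0)"
    if "k < q" "r < \<mu> k" for k r
    using Phi_map_column_eq_bvecD[OF aw H that(1) J[OF that(1) i[OF that(2)]] a that(2) a'
        col[OF that(1) i[OF that(2)]]] .
  have "(H * ?g) $$ (a', a) = (\<Sum>b<m. \<Sum>k<q. \<Sum>r<\<mu> k.
      if ?b k a r = b then H $$ (a', b) * (t k (?c k a r) * s k r) else 0)"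
    using H a a' unfolding selection_right_inverse_def
    by (simp add: scalar_prod_def atLeast0LessThan sum_distrib_left if_distrib cong: if_cong)
  also have "\<dots> = (\<Sum>k<q. \<Sum>r<\<mu> k. \<Sum>b<m.
      if ?b k a r = b then H $$ (a', b) * (t k (?c k a r) * s k r) else 0)"
    by (subst sum.swap) (rule sum.cong[OF refl], rule sum.swap)
  also have "\<dots> = (\<Sum>k<q. \<Sum>r<\<mu> k. H $$ (a', ?b k a r) * t k (?c k a r) * s k r)"
    by (intro sum.cong refl) (simp add: b mult.assoc)
  also have "\<dots> = (\<Sum>k<q. \<Sum>r<\<mu> k. if a' = a then t k r * s k r else 0)"
    by (intro sum.cong refl) (simp add: entry)
  also have "\<dots> = 1\<^sub>m n $$ (a', a)"
    using a a' aw_setup_sum_t_mult_s[OF aw] by (simp add: sum_if_const_cond)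
  finally show "(H * ?g) $$ (a', a) = 1\<^sub>m n $$ (a', a)" .
qed (use H in \<open>simp_all add: selection_right_inverse_def\<close>)

theorem lemma4p4:
  fixes e s t :: "nat \<Rightarrow> nat \<Rightarrow> 'a::ring_1"
    and q m n :: nat and \<mu> :: "nat \<Rightarrow> nat" and S :: "nat \<Rightarrow> nat set"
  assumes "right_artinian TYPE('a)"
    and "aw_setup q \<mu> e s t"
    and "\<forall>k<q. S k \<subseteq> {..<\<mu> k * m} \<and> card (S k) = \<mu> k * n"
  shows "\<exists>g \<in> carrier_mat m n. \<forall>h. column_adapted q \<mu> e s t m n h \<and>
           (\<forall>k<q. frakS q \<mu> e s t m n h k = S k) \<longrightarrow> h * g = 1\<^sub>m n"
proof (intro bexI allI impI)
  define J where "J k i = sorted_list_of_set (S k) ! i" for k i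
  have J_less: "J k i < \<mu> k * m" if "k < q" "i < \<mu> k * n" for k i
  proof -
    have "finite (S k)" using assms(3) that(1) finite_subset by blast
    then have "J k i \<in> S k"
      using assms(3) that unfolding J_def by (metis length_sorted_list_of_set nth_mem set_sorted_list_of_set)
    then show ?thesis using assms(3) that(1) by auto
  qed
  fix h
  assume "column_adapted q \<mu> e s t m n h \<and> (\<forall>k<q. frakS q \<mu> e s t m n h k = S k)"
  then show "h * selection_right_inverse q \<mu> s t m n J = 1\<^sub>m n"
    using J_less by (intro mult_selection_right_inverse[OF assms(2)])
      (auto simp: column_adapted_def J_def Let_def)
qed (rule selection_right_inverse_carrier)

end
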